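(* Let $\Gamma$ be a simple $*$-path in $\Lambda$, let $t\in\mathbb{N}$ and $s\in\mathbb{N}$. For every $k\in\{0,\dots,|\mathrm{support}(\Gamma)|\}$ and every configuration $y$ in which exactly $k$ edges of $\Gamma$ are closed (with $P_\mu(Y_t=y)>0$), $$P_\mu\big(\Gamma\text{ closed in }Y_{t+s}\ \big|\ Y_t=y\big)\leqslant\left(\frac{s(1-p)}{|\Lambda|(1+p/q-p)}\right)^{|\mathrm{support}(\Gamma)|-k}.$$
   Context: Let $d\geqslant 2$, $\mathbb{L}^d=(\mathbb{Z}^d,\mathbb{E}^d)$ the nearest-neighbour lattice, and $q\geqslant 1$, $p\in[0,1]$. The box $\Lambda=(V,E)$ is the subgraph of $\mathbb{L}^d$ induced by the vertices in a $d$-dimensional cube centred at the origin (not necessarily axis-parallel); $|\Lambda|=|E|$. $\partial\Lambda=\{x\in V:\exists y\notin V,\ \langle x,y\rangle\in\mathbb{E}^d\}$. A hyperplane through the origin parallel to a face of the cube splits $\Lambda$ into $\Lambda^+,\Lambda^-$; $T=\partial\Lambda\cap\Lambda^+$, $B=\partial\Lambda\cap\Lambda^-$. For $\omega\in\{0,1\}^E$ (edges with $\omega(e)=1$ open), $\Phi^{TB}_{\Lambda,p,q}(\omega)\propto\prod_{e\in E}p^{\omega(e)}(1-p)^{1-\omega(e)}q^{k^{TB}(\omega)}$, where $k^{TB}(\omega)$ is the number of connected components of the graph obtained from $(V,\{\text{open edges}\})$ by adding two extra vertices, one joined to every vertex of $T$, the other to every vertex of $B$. $\{T\nleftrightarrow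 B\}$: no open path in $\Lambda$ joins $T$ to $B$. Coupled dynamics: $(E_t)_{t\in\mathbb{N}}$ i.i.d. uniform on $E$, $(U_t)_{t\in\mathbb{N}}$ i.i.d. uniform on $[0,1]$, independent. With $\Phi=\Phi^{TB}_{\Lambda,p,q}$, $\omega^e$ / $\omega_e$ the configuration with $e$ opened / closed, and $\theta(\omega,e)=\Phi(\omega_e)/(\Phi(\omega^e)+\Phi(\omega_e))$: at time $t$, with $e=E_t$, only $e$ is updated; $X_t(e)=1$ iff $U_t\geqslant\theta(X_{t-1},e)$; $Y_t(e)=1$ iff $U_t\geqslant\theta(Y_{t-1},e)$ and opening $e$ in $Y_{t-1}$ does not connect $T$ to $B$. On $\{(\omega_1,\omega_2):\omega_2\in\{T\nleftrightarrow B\},\ \omega_1\geqslant\omega_2\}$ this chain has a unique stationary distribution $\mu_{\Lambda,p,q}$; $P_\mu$ denotes the law of $(X_t,Y_t)_{t\in\mathbb{N}}$ started from $(X_0,Y_0)\sim\mu_{\Lambda,p,q}$. Two edges $e,f$ are $*$-neighbours if $\|m_e-m_f\|_\infty\leqslant 1$ ($m_e$ the midpoint of $e$); a $*$-path is a sequence of edges with consecutive ones $*$-neighbours; $\mathrm{support}(\Gamma)$ is its set of edges; it is simple if $|\mathrm{support}(\Gamma)|$ equals its length; "$\Gamma$ closed in $Y_{t+s}$" means all edges of $\Gamma$ are closed in $Y_{t+s}$. *)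

theory Defs
  imports "HOL-Probability.Probability"
begin

type_synonym 'd vtx = "int ^ 'd"
type_synonym 'd edge = "'d vtx set"
type_synonym 'd config = "'d edge \<Rightarrow> bool"   (* True = open *)

definition rv :: "'d::finite vtx \<Rightarrow> real ^ 'd" where
  "rv x = (\<chi> i. of_int (x $ i))"

definition lattice_edges :: "'d::finite edge set" where
  "lattice_edges = {{x, y} | x y. (\<Sum>i\<in>UNIV. \<bar>x $ i - y $ i\<bar>) = 1}"

definition orthonormal_frame :: "('d::finite \<Rightarrow> real ^ 'd) \<Rightarrow> bool" where
  "orthonormal_frame u \<longleftrightarrow> (\<forall>i j. u i \<bullet> u j = (if i = j then 1 else 0))"

definition box_vertices :: "('d::finite \<Rightarrow> real ^ 'd) \<Rightarrow> real \<Rightarrow> 'd vtx set" where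
  "box_vertices u r = {x. \<forall>i. \<bar>rv x \<bullet> u i\<bar> \<le> r}"

definition box_edges :: "'d::finite vtx set \<Rightarrow> 'd edge set" where
  "box_edges V = {e \<in> lattice_edges. e \<subseteq> V}"

definition boundary :: "'d::finite vtx set \<Rightarrow> 'd vtx set" where
  "boundary V = {x \<in> V. \<exists>y. y \<notin> V \<and> {x, y} \<in> lattice_edges}"

definition top_set :: "'d::finite vtx set \<Rightarrow> ('d \<Rightarrow> real ^ 'd) \<Rightarrow> 'd \<Rightarrow> 'd vtx set" where
  "top_set V u j = {x \<in> boundary V. rv x \<bullet> u j \<ge> 0}"

definition bot_set :: "'d::finite vtx set \<Rightarrow> ('d \<Rightarrow> real ^ 'd) \<Rightarrow> 'd \<Rightarrow> 'd vtx set" where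
  "bot_set V u j = {x \<in> boundary V. rv x \<bullet> u j < 0}"

definition configs :: "'d edge set \<Rightarrow> 'd config set" where
  "configs E = {w. \<forall>e. e \<notin> E \<longrightarrow> \<not> w e}"

definition open_adj :: "'d edge set \<Rightarrow> 'd config \<Rightarrow> ('d vtx \<times> 'd vtx) set" where
  "open_adj E w = {(x, y). {x, y} \<in> E \<and> w {x, y}}"

definition connects :: "'d edge set \<Rightarrow> 'd vtx set \<Rightarrow> 'd vtx set \<Rightarrow> 'd config \<Rightarrow> bool" where
  "connects E T B w \<longleftrightarrow> (\<exists>x\<in>T. \<exists>y\<in>B. (x, y) \<in> (open_adj E w)\<^sup>*)"

text \<open>Augmented graph: Inr True is the ghost vertex joined to T, Inr False the one joined to B.\<close>
definition aug_adj :: "'d edge set \<Rightarrow> 'd vtx set \<Rightarrow> 'd vtx set \<Rightarrow> 'd config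
    \<Rightarrow> ('d vtx + bool) rel" where
  "aug_adj E T B w =
     {(Inl x, Inl y) | x y. {x, y} \<in> E \<and> w {x, y}}
     \<union> {(Inl x, Inr True) | x. x \<in> T} \<union> {(Inr True, Inl x) | x. x \<in> T}
     \<union> {(Inl x, Inr False) | x. x \<in> B} \<union> {(Inr False, Inl x) | x. x \<in> B}"

definition kTB :: "'d vtx set \<Rightarrow> 'd edge set \<Rightarrow> 'd vtx set \<Rightarrow> 'd vtx set \<Rightarrow> 'd config \<Rightarrow> nat" where
  "kTB V E T B w = card ((Inl ` V \<union> {Inr True, Inr False}) // ((aug_adj E T B w)\<^sup>*))"

definition fk_weight :: "'d vtx set \<Rightarrow> 'd edge set \<Rightarrow> 'd vtx set \<Rightarrow> 'd vtx set
    \<Rightarrow> real \<Rightarrow> real \<Rightarrow> 'd config \<Rightarrow> real" where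
  "fk_weight V E T B p q w = (\<Prod>e\<in>E. if w e then p else 1 - p) * q ^ kTB V E T B w"

definition fk :: "'d vtx set \<Rightarrow> 'd edge set \<Rightarrow> 'd vtx set \<Rightarrow> 'd vtx set
    \<Rightarrow> real \<Rightarrow> real \<Rightarrow> 'd config \<Rightarrow> real" where
  "fk V E T B p q w =
     fk_weight V E T B p q w / (\<Sum>w'\<in>configs E. fk_weight V E T B p q w')"

definition theta :: "'d vtx set \<Rightarrow> 'd edge set \<Rightarrow> 'd vtx set \<Rightarrow> 'd vtx set
    \<Rightarrow> real \<Rightarrow> real \<Rightarrow> 'd config \<Rightarrow> 'd edge \<Rightarrow> real" where
  "theta V E T B p q w e =
     fk V E T B p q (w(e := False)) /
       (fk V E T B p q (w(e := True)) + fk V E T B p q (w(e := False)))"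

definition step :: "'d vtx set \<Rightarrow> 'd edge set \<Rightarrow> 'd vtx set \<Rightarrow> 'd vtx set
    \<Rightarrow> real \<Rightarrow> real \<Rightarrow> 'd config \<times> 'd config \<Rightarrow> 'd edge \<Rightarrow> real \<Rightarrow> 'd config \<times> 'd config" where
  "step V E T B p q xy e u =
     ((fst xy)(e := (u \<ge> theta V E T B p q (fst xy) e)),
      (snd xy)(e := (u \<ge> theta V E T B p q (snd xy) e
                      \<and> \<not> connects E T B ((snd xy)(e := True)))))"

type_synonym 'd sample = "('d config \<times> 'd config) \<times> (nat \<Rightarrow> 'd edge) \<times> (nat \<Rightarrow> real)"

text \<open>(X_t, Y_t) as a function of the initial state and the sequences (E_t), (U_t).\<close>
fun chain :: "'d vtx set \<Rightarrow> 'd edge set \<Rightarrow> 'd vtx set \<Rightarrow> 'd vtx set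
    \<Rightarrow> real \<Rightarrow> real \<Rightarrow> nat \<Rightarrow> 'd sample \<Rightarrow> 'd config \<times> 'd config" where
  "chain V E T B p q 0 w = fst w"
| "chain V E T B p q (Suc t) w =
     step V E T B p q (chain V E T B p q t w) (fst (snd w) (Suc t)) (snd (snd w) (Suc t))"

definition law :: "('d config \<times> 'd config) pmf \<Rightarrow> 'd edge set \<Rightarrow> 'd sample measure" where
  "law \<mu> E = measure_pmf \<mu> \<Otimes>\<^sub>M
     (PiM UNIV (\<lambda>_::nat. uniform_count_measure E) \<Otimes>\<^sub>M
      PiM UNIV (\<lambda>_::nat. uniform_measure lborel {0..1::real}))"

definition state_space :: "'d edge set \<Rightarrow> 'd vtx set \<Rightarrow> 'd vtx set \<Rightarrow> ('d config \<times> 'd config) set" where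
  "state_space E T B = {(w1, w2). w1 \<in> configs E \<and> w2 \<in> configs E
                          \<and> \<not> connects E T B w2 \<and> w2 \<le> w1}"

definition stationary :: "'d vtx set \<Rightarrow> 'd edge set \<Rightarrow> 'd vtx set \<Rightarrow> 'd vtx set
    \<Rightarrow> real \<Rightarrow> real \<Rightarrow> ('d config \<times> 'd config) pmf \<Rightarrow> bool" where
  "stationary V E T B p q \<mu> \<longleftrightarrow>
     set_pmf \<mu> \<subseteq> state_space E T B \<and>
     (\<forall>A. measure (law \<mu> E) {w \<in> space (law \<mu> E). chain V E T B p q 1 w \<in> A}
            = measure_pmf.prob \<mu> A)"

definition midpoint_e :: "'d::finite edge \<Rightarrow> real ^ 'd" where
  "midpoint_e e = (\<chi> i. (\<Sum>x\<in>e. of_int (x $ i)) / 2)"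

definition star_nb :: "'d::finite edge \<Rightarrow> 'd edge \<Rightarrow> bool" where
  "star_nb e f \<longleftrightarrow> (\<forall>i. \<bar>midpoint_e e $ i - midpoint_e f $ i\<bar> \<le> 1)"

definition star_path :: "'d::finite edge set \<Rightarrow> 'd edge list \<Rightarrow> bool" where
  "star_path E \<Gamma> \<longleftrightarrow> set \<Gamma> \<subseteq> E \<and>
     (\<forall>i. Suc i < length \<Gamma> \<longrightarrow> star_nb (\<Gamma> ! i) (\<Gamma> ! Suc i))"

end

theory Submission
  imports Defs "HOL-Analysis.Weierstrass_Theorems"
begin

text \<open>
  An edge of \<Gamma> that is open in Y_t and closed in Y_{t+s} must have been selected at one of
  the times t+1, ..., t+s together with a uniform variable below \<theta>(Y, e): the restricted
  dynamics never connects T to B, so an update that does not close an open edge leaves it open.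
  Closing an edge raises the number of TB-clusters by at most one, which gives
  \<theta> \<le> q(1-p)/(q(1-p)+p) = (1-p)/(1+p/q-p). The updates after time t are independent of
  Y_t, and a union bound over the s^m ways of assigning update times to the m edges of \<Gamma>
  that are open in y bounds the probability that all of them are hit in this way by
  (s (1-p)/(|\<Lambda>|(1+p/q-p)))^m.
\<close>

section \<open>Cluster counts and heat-bath probabilities\<close>

lemma rtrancl_insert_edge_cases:
  assumes "(u, v) \<in> (R \<union> {(a, b), (b, a)})\<^sup>*"
  shows "(u, v) \<in> R\<^sup>* \<or> (u, a) \<in> R\<^sup>* \<and> (b, v) \<in> R\<^sup>* \<or> (u, b) \<in> R\<^sup>* \<and> (a, v) \<in> R\<^sup>*"
  using assms
proof (induction rule: rtrancl_induct)
  case (step v v')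
  then consider "(v, v') \<in> R" | "v = a" "v' = b" | "v = b" "v' = a" by blast
  then show ?case
    using step.IH by cases (auto intro: rtrancl_into_rtrancl)
qed simp

lemma card_quotient_rtrancl_le_insert_edge:
  assumes "finite S" and "sym R"
  shows "card (S // R\<^sup>*) \<le> card (S // (R \<union> {(a, b), (b, a)})\<^sup>*) + 1"
proof -
  let ?R0 = "R\<^sup>*" and ?R1 = "(R \<union> {(a, b), (b, a)})\<^sup>*"
  have R0_R1: "?R0 \<subseteq> ?R1" by (rule rtrancl_mono) auto
  have class_eq: "?R0 `` {z} = ?R0 `` {z'}" if "(z, z') \<in> ?R0" for z z'
    using that sym_rtrancl[OF assms(2)] by (auto simp: sym_def intro: rtrancl_trans)
  define f where "f X = ?R1 `` X" for X
  have f_class: "f (?R0 `` {x}) = ?R1 `` {x}" for x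
    unfolding f_def using R0_R1 by (auto intro: rtrancl_trans)
  define Ca where "Ca = ?R0 `` {a}"
  have "inj_on f (S // ?R0 - {Ca})"
  proof (rule inj_onI)
    fix X X' assume X: "X \<in> S // ?R0 - {Ca}" and X': "X' \<in> S // ?R0 - {Ca}" and "f X = f X'"
    obtain x x' where x: "X = ?R0 `` {x}" and x': "X' = ?R0 `` {x'}"
      using X X' by (auto simp: quotient_def)
    have "(x, x') \<in> ?R1"
      using \<open>f X = f X'\<close> by (auto simp: x x' f_class)
    then consider "(x, x') \<in> ?R0" | "(x, a) \<in> ?R0" | "(a, x') \<in> ?R0"
      by (blast dest: rtrancl_insert_edge_cases)
    then show "X = X'"
      by cases (use X X' class_eq in \<open>auto simp: x x' Ca_def\<close>)
  qed
  moreover have "f ` (S // ?R0 - {Ca}) \<subseteq> S // ?R1"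
    by (auto simp: quotient_def f_class)
  moreover have "finite (S // ?R0)" "finite (S // ?R1)"
    using assms(1) by (auto simp: quotient_def)
  ultimately have "card (S // ?R0 - {Ca}) \<le> card (S // ?R1)"
    by (metis card_image card_mono)
  then show ?thesis
    using \<open>finite (S // ?R0)\<close> by (simp add: card_Diff_singleton_if split: if_splits)
qed

lemma aug_adj_sym: "sym (aug_adj E T B w)"
  unfolding aug_adj_def sym_def by (auto simp: insert_commute)

lemma aug_adj_open_edge:
  assumes "{x, y} \<in> E"
  shows "aug_adj E T B (w({x, y} := True)) = aug_adj E T B (w({x, y} := False)) \<union> {(Inl x, Inl y), (Inl y, Inl x)}"
  using assms unfolding aug_adj_def by (auto simp: doubleton_eq_iff insert_commute)

lemma kTB_close_edge_le:
  assumes "finite V" and "{x, y} \<in> E"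
  shows "kTB V E T B (w({x, y} := False)) \<le> kTB V E T B (w({x, y} := True)) + 1"
  unfolding kTB_def aug_adj_open_edge[OF assms(2)]
  by (rule card_quotient_rtrancl_le_insert_edge) (use assms(1) aug_adj_sym in auto)

lemma fk_weight_fun_upd:
  assumes "finite E" and "e \<in> E"
  shows "fk_weight V E T B p q (w(e := b)) =
     (if b then p else 1 - p) * (\<Prod>e'\<in>E - {e}. if w e' then p else 1 - p) * q ^ kTB V E T B (w(e := b))"
proof -
  have "(\<Prod>e'\<in>E - {e}. if (w(e := b)) e' then p else 1 - p) = (\<Prod>e'\<in>E - {e}. if w e' then p else 1 - p)"
    by (rule prod.cong) auto
  then show ?thesis
    using assms by (simp add: fk_weight_def prod.remove)
qed

lemma fk_weight_nonneg:
  fixes p q :: real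
  assumes "0 \<le> p" "p \<le> 1" "0 \<le> q"
  shows "0 \<le> fk_weight V E T B p q w"
  using assms unfolding fk_weight_def by (intro mult_nonneg_nonneg prod_nonneg zero_le_power) auto

lemma fk_weight_close_edge_le:
  fixes p q :: real
  assumes "finite V" "finite E" "{x, y} \<in> E" "0 \<le> p" "p \<le> 1" "1 \<le> q"
  shows "p * fk_weight V E T B p q (w({x, y} := False)) \<le> q * (1 - p) * fk_weight V E T B p q (w({x, y} := True))"
proof -
  define P where "P = (\<Prod>e'\<in>E - {{x, y}}. if w e' then p else 1 - p)"
  have "P \<ge> 0"
    unfolding P_def using assms by (intro prod_nonneg) auto
  have "q ^ kTB V E T B (w({x, y} := False)) \<le> q ^ (kTB V E T B (w({x, y} := True)) + 1)"
    using kTB_close_edge_le[OF assms(1,3)] assms(6) by (intro power_increasing) auto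
  then have "p * (1 - p) * P * q ^ kTB V E T B (w({x, y} := False))
      \<le> p * (1 - p) * P * (q * q ^ kTB V E T B (w({x, y} := True)))"
    using \<open>P \<ge> 0\<close> assms(4,5) by (intro mult_left_mono) auto
  then show ?thesis
    using assms(2,3) by (simp add: fk_weight_fun_upd P_def algebra_simps)
qed

lemma closing_ratio_bounds:
  fixes p q :: real
  assumes "0 \<le> p" "p \<le> 1" "1 \<le> q"
  shows "1 \<le> q * (1 - p) + p" and "0 \<le> q * (1 - p) / (q * (1 - p) + p)"
    and "q * (1 - p) / (q * (1 - p) + p) \<le> 1"
proof -
  show D: "1 \<le> q * (1 - p) + p"
    using mult_right_mono[of 1 q "1 - p"] assms by simp
  then show "0 \<le> q * (1 - p) / (q * (1 - p) + p)" "q * (1 - p) / (q * (1 - p) + p) \<le> 1"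
    using assms by simp_all
qed

lemma theta_le:
  fixes p q :: real
  assumes "finite V" "finite E" "e \<in> lattice_edges" "e \<in> E" "0 \<le> p" "p \<le> 1" "1 \<le> q"
  shows "theta V E T B p q w e \<le> q * (1 - p) / (q * (1 - p) + p)"
proof -
  obtain x y where e: "e = {x, y}"
    using assms(3) by (auto simp: lattice_edges_def)
  define W0 where "W0 = fk_weight V E T B p q (w(e := False))"
  define W1 where "W1 = fk_weight V E T B p q (w(e := True))"
  define Z where "Z = (\<Sum>w'\<in>configs E. fk_weight V E T B p q w')"
  note D = closing_ratio_bounds(1)[OF assms(5-7)]
  have "0 \<le> W0" "0 \<le> W1"
    using assms(5,6,7) by (simp_all add: W0_def W1_def fk_weight_nonneg)
  have "p * W0 \<le> q * (1 - p) * W1"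
    unfolding W0_def W1_def e using fk_weight_close_edge_le assms(1,2,4,5,6,7) e by blast
  then have "W0 * (q * (1 - p) + p) \<le> q * (1 - p) * (W1 + W0)"
    by (simp add: algebra_simps)
  moreover note closing_ratio_bounds(2)[OF assms(5-7)]
  ultimately have "W0 / (W1 + W0) \<le> q * (1 - p) / (q * (1 - p) + p)"
    using D \<open>0 \<le> W0\<close> \<open>0 \<le> W1\<close>
    by (cases "W1 + W0 = 0") (simp_all add: frac_le_eq divide_le_eq le_divide_eq mult.commute)
  moreover have "theta V E T B p q w e = (if Z = 0 then 0 else W0 / (W1 + W0))"
    by (simp add: theta_def fk_def W0_def W1_def Z_def add_divide_distrib[symmetric])
  ultimately show ?thesis
    using D assms(5,6,7) by auto
qed

section \<open>The restricted dynamics\<close>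

lemma chain_cong_prefix:
  assumes "fst w = fst w'"
    and "\<And>i. i \<le> n \<Longrightarrow> fst (snd w) i = fst (snd w') i \<and> snd (snd w) i = snd (snd w') i"
  shows "chain V E T B p q n w = chain V E T B p q n w'"
  using assms by (induction n) auto

lemma connects_mono:
  assumes "w \<le> w'" and "connects E T B w"
  shows "connects E T B w'"
proof -
  have "open_adj E w \<subseteq> open_adj E w'"
    using assms(1) by (auto simp: open_adj_def le_fun_def)
  then show ?thesis
    using assms(2) rtrancl_mono unfolding connects_def by blast
qed

lemma chain_not_connects:
  assumes "\<not> connects E T B (snd (fst w))"
  shows "\<not> connects E T B (snd (chain V E T B p q n w))"
proof (induction n)
  case (Suc n)
  let ?Y = "snd (chain V E T B p q n w)" and ?e = "fst (snd w) (Suc n)"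
  obtain b where b: "snd (chain V E T B p q (Suc n) w) = ?Y(?e := b)"
    and b_connects: "b \<Longrightarrow> \<not> connects E T B (?Y(?e := True))"
    by (simp add: step_def)
  show ?case
  proof (cases b)
    case False
    have "?Y(?e := False) \<le> ?Y"
      by (auto simp: le_fun_def)
    then have "\<not> connects E T B (?Y(?e := False))"
      using Suc.IH connects_mono by blast
    then show ?thesis
      using b False by (simp only: simp_thms)
  qed (use b b_connects in \<open>simp only: simp_thms\<close>)
qed (use assms in simp)

lemma chain_closing_edge_updated:
  assumes "\<not> connects E T B (snd (fst w))"
    and "snd (chain V E T B p q t w) e" and "\<not> snd (chain V E T B p q (t + s) w) e"
  shows "\<exists>i<s. fst (snd w) (Suc (t + i)) = e \<and>
           snd (snd w) (Suc (t + i)) < theta V E T B p q (snd (chain V E T B p q (t + i) w)) e"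
  using assms(3)
proof (induction s)
  case (Suc s)
  show ?case
  proof (cases "snd (chain V E T B p q (t + s) w) e")
    case False
    then show ?thesis
      using Suc.IH less_SucI by blast
  next
    case True
    let ?Y = "snd (chain V E T B p q (t + s) w)"
    let ?e = "fst (snd w) (Suc (t + s))" and ?u = "snd (snd w) (Suc (t + s))"
    have "\<not> connects E T B (?Y(e := True))"
      using chain_not_connects[OF assms(1)] True by (simp add: fun_upd_idem)
    then have "?e = e \<and> ?u < theta V E T B p q ?Y e"
      using Suc.prems True by (auto simp: step_def split: if_splits)
    then show ?thesis
      by (intro exI[of _ s]) simp
  qed
qed (use assms(2) in simp)

section \<open>Finiteness of the box\<close>

lemma norm_orthonormal_frame: "orthonormal_frame u \<Longrightarrow> norm (u i) = 1"
  by (simp add: norm_eq_1 orthonormal_frame_def)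

lemma orthonormal_frame_inj: "orthonormal_frame u \<Longrightarrow> inj u"
  unfolding orthonormal_frame_def by (metis injI zero_neq_one)

lemma orthonormal_frame_pairwise_orthogonal: "orthonormal_frame u \<Longrightarrow> pairwise orthogonal (range u)"
  by (auto simp: pairwise_def orthogonal_def orthonormal_frame_def)

lemma span_orthonormal_frame:
  fixes u :: "'d::finite \<Rightarrow> real ^ 'd"
  assumes "orthonormal_frame u"
  shows "span (range u) = UNIV"
proof -
  have "0 \<notin> range u"
    using assms unfolding orthonormal_frame_def by (metis image_iff inner_zero_left zero_neq_one)
  then have "independent (range u)"
    using assms by (intro pairwise_orthogonal_independent orthonormal_frame_pairwise_orthogonal)
  moreover have "card (range u) = CARD('d)"
    using orthonormal_frame_inj[OF assms] by (simp add: card_image)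
  ultimately have "UNIV \<subseteq> span (range u)"
    by (intro card_ge_dim_independent) auto
  then show ?thesis by auto
qed

lemma norm_le_orthonormal_frame:
  fixes u :: "'d::finite \<Rightarrow> real ^ 'd"
  assumes u: "orthonormal_frame u" and x: "\<And>i. \<bar>x \<bullet> u i\<bar> \<le> r"
  shows "norm x \<le> real CARD('d) * r"
proof -
  have "x = (\<Sum>v\<in>range u. (x \<bullet> v) *\<^sub>R v)"
    using u by (intro orthonormal_basis_expand[symmetric] orthonormal_frame_pairwise_orthogonal)
      (auto simp: span_orthonormal_frame norm_orthonormal_frame)
  also have "norm \<dots> \<le> (\<Sum>v\<in>range u. \<bar>x \<bullet> v\<bar>)"
    using u by (intro norm_sum[THEN order_trans] sum_mono) (auto simp: norm_orthonormal_frame)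
  also have "\<dots> \<le> (\<Sum>v\<in>range u. r)"
    using x by (intro sum_mono) auto
  also have "\<dots> = real CARD('d) * r"
    using orthonormal_frame_inj[OF u] by (simp add: card_image)
  finally show ?thesis .
qed

lemma finite_int_vec_bounded: "finite {x :: int ^ 'd::finite. \<forall>k. \<bar>x $ k\<bar> \<le> M}"
proof (rule finite_subset)
  show "{x :: int ^ 'd. \<forall>k. \<bar>x $ k\<bar> \<le> M} \<subseteq> vec_nth -` (PiE UNIV (\<lambda>_. {-M..M}))"
    by (auto simp: PiE_iff abs_le_iff minus_le_iff)
  show "finite (vec_nth -` (PiE UNIV (\<lambda>_::'d. {-M..M})))"
    by (rule finite_vimageI) (auto intro: finite_PiE simp: inj_def vec_eq_iff)
qed

lemma finite_box_vertices:
  fixes u :: "'d::finite \<Rightarrow> real ^ 'd"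
  assumes "orthonormal_frame u"
  shows "finite (box_vertices u r)"
proof (rule finite_subset[OF _ finite_int_vec_bounded])
  show "box_vertices u r \<subseteq> {x. \<forall>k. \<bar>x $ k\<bar> \<le> \<lceil>real CARD('d) * r\<rceil>}"
  proof safe
    fix x k assume "x \<in> box_vertices u r"
    then have "norm (rv x) \<le> real CARD('d) * r"
      using assms by (intro norm_le_orthonormal_frame) (auto simp: box_vertices_def)
    moreover have "\<bar>rv x $ k\<bar> \<le> norm (rv x)"
      by (rule component_le_norm_cart)
    ultimately show "\<bar>x $ k\<bar> \<le> \<lceil>real CARD('d) * r\<rceil>"
      by (simp add: rv_def) linarith
  qed
qed

lemma finite_box_edges: "finite V \<Longrightarrow> finite (box_edges V)"
  by (rule finite_subset[of _ "Pow V"]) (auto simp: box_edges_def)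

section \<open>Independence of the future updates from the past\<close>

lemma emeasure_section_integral_distr:
  assumes "sigma_finite_measure M" and f: "f \<in> M \<Otimes>\<^sub>M M \<rightarrow>\<^sub>M M"
    and f_distr: "distr (M \<Otimes>\<^sub>M M) M f = M" and A: "A \<in> sets M"
  shows "(\<integral>\<^sup>+ a. emeasure M (Pair a -` (f -` A \<inter> space (M \<Otimes>\<^sub>M M))) \<partial>M) = emeasure M A"
proof -
  interpret sigma_finite_measure M by fact
  have "(\<integral>\<^sup>+ a. emeasure M (Pair a -` (f -` A \<inter> space (M \<Otimes>\<^sub>M M))) \<partial>M)
      = emeasure (M \<Otimes>\<^sub>M M) (f -` A \<inter> space (M \<Otimes>\<^sub>M M))"
    using f A by (intro emeasure_pair_measure_alt[symmetric]) measurable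
  also have "\<dots> = emeasure M A"
    using f A by (subst (2) f_distr[symmetric]) (simp add: emeasure_distr)
  finally show ?thesis .
qed

lemma distr_pair_measure_combine:
  assumes M1: "prob_space M1" and M2: "prob_space M2"
    and f[measurable]: "f \<in> M1 \<Otimes>\<^sub>M M1 \<rightarrow>\<^sub>M M1" and g[measurable]: "g \<in> M2 \<Otimes>\<^sub>M M2 \<rightarrow>\<^sub>M M2"
    and f_distr: "distr (M1 \<Otimes>\<^sub>M M1) M1 f = M1" and g_distr: "distr (M2 \<Otimes>\<^sub>M M2) M2 g = M2"
  shows "distr ((M1 \<Otimes>\<^sub>M M2) \<Otimes>\<^sub>M (M1 \<Otimes>\<^sub>M M2)) (M1 \<Otimes>\<^sub>M M2)
           (\<lambda>((a, b), (a', b')). (f (a, a'), g (b, b'))) = M1 \<Otimes>\<^sub>M M2"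
    (is "distr (?R \<Otimes>\<^sub>M ?R) ?R ?F = ?R")
proof -
  interpret M1: prob_space M1 by fact
  interpret M2: prob_space M2 by fact
  have R: "sigma_finite_measure ?R"
    by (rule prob_space_imp_sigma_finite[OF prob_space_pair[OF M1 M2]])
  have F_eq: "?F = (\<lambda>z. (f (fst (fst z), fst (snd z)), g (snd (fst z), snd (snd z))))"
    by (auto simp: fun_eq_iff)
  have F[measurable]: "?F \<in> ?R \<Otimes>\<^sub>M ?R \<rightarrow>\<^sub>M ?R"
    unfolding F_eq by measurable
  have "emeasure M1 A * emeasure M2 B = emeasure (distr (?R \<Otimes>\<^sub>M ?R) ?R ?F) (A \<times> B)"
    if A[measurable]: "A \<in> sets M1" and B[measurable]: "B \<in> sets M2" for A B
  proof -
    define X1 where "X1 = f -` A \<inter> space (M1 \<Otimes>\<^sub>M M1)"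
    define X2 where "X2 = g -` B \<inter> space (M2 \<Otimes>\<^sub>M M2)"
    have [measurable]: "X1 \<in> sets (M1 \<Otimes>\<^sub>M M1)" "X2 \<in> sets (M2 \<Otimes>\<^sub>M M2)"
      unfolding X1_def X2_def by measurable
    have "emeasure (distr (?R \<Otimes>\<^sub>M ?R) ?R ?F) (A \<times> B)
        = emeasure (?R \<Otimes>\<^sub>M ?R) (?F -` (A \<times> B) \<inter> space (?R \<Otimes>\<^sub>M ?R))"
      by (simp add: emeasure_distr)
    also have "\<dots> = (\<integral>\<^sup>+ r. emeasure ?R (Pair (fst r) -` X1 \<times> Pair (snd r) -` X2) \<partial>?R)"
      by (subst sigma_finite_measure.emeasure_pair_measure_alt[OF R])
         (auto intro!: nn_integral_cong arg_cong[where f="emeasure ?R"]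
               simp: X1_def X2_def space_pair_measure)
    also have "\<dots> = (\<integral>\<^sup>+ r. emeasure M1 (Pair (fst r) -` X1) * emeasure M2 (Pair (snd r) -` X2) \<partial>?R)"
      by (intro nn_integral_cong) (simp add: M2.emeasure_pair_measure_Times)
    also have "\<dots> = (\<integral>\<^sup>+ a. \<integral>\<^sup>+ b. emeasure M1 (Pair a -` X1) * emeasure M2 (Pair b -` X2) \<partial>M2 \<partial>M1)"
      by (subst M2.nn_integral_fst[symmetric])
         (auto intro!: borel_measurable_times_ennreal M1.measurable_emeasure_Pair M2.measurable_emeasure_Pair
               measurable_compose[OF measurable_fst] measurable_compose[OF measurable_snd])
    also have "\<dots> = (\<integral>\<^sup>+ a. emeasure M1 (Pair a -` X1) \<partial>M1) * (\<integral>\<^sup>+ b. emeasure M2 (Pair b -` X2) \<partial>M2)"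
      by (simp add: nn_integral_cmult nn_integral_multc M1.measurable_emeasure_Pair M2.measurable_emeasure_Pair)
    also have "\<dots> = emeasure M1 A * emeasure M2 B"
      unfolding X1_def X2_def
      by (simp only: emeasure_section_integral_distr M1.sigma_finite_measure M2.sigma_finite_measure
          f g f_distr g_distr A B)
    finally show ?thesis by simp
  qed
  then show ?thesis
    by (intro pair_measure_eqI[symmetric]) (auto intro: M1.sigma_finite_measure M2.sigma_finite_measure)
qed

text \<open>
  Independence of past and future in abstract form: c splices a past x and a future y into
  one sample, h reads the future back, and A only sees the past.
\<close>

lemma emeasure_Int_vimage_eq_mult:
  assumes "sigma_finite_measure M" and "prob_space R"
    and c[measurable]: "c \<in> R \<Otimes>\<^sub>M R \<rightarrow>\<^sub>M R" and c_distr: "distr (R \<Otimes>\<^sub>M R) R c = R"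
    and h[measurable]: "h \<in> R \<rightarrow>\<^sub>M R"
    and h_c: "\<And>x y. x \<in> space R \<Longrightarrow> y \<in> space R \<Longrightarrow> h (c (x, y)) = y"
    and A[measurable]: "A \<in> sets (M \<Otimes>\<^sub>M R)"
    and A_c: "\<And>\<omega> x y y'. \<omega> \<in> space M \<Longrightarrow> x \<in> space R \<Longrightarrow> y \<in> space R \<Longrightarrow> y' \<in> space R \<Longrightarrow>
               (\<omega>, c (x, y)) \<in> A \<longleftrightarrow> (\<omega>, c (x, y')) \<in> A"
    and K[measurable]: "K \<in> sets R"
  shows "emeasure (M \<Otimes>\<^sub>M R) (A \<inter> {w \<in> space (M \<Otimes>\<^sub>M R). h (snd w) \<in> K})
       = emeasure (M \<Otimes>\<^sub>M R) A * emeasure R K"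
proof -
  interpret R: prob_space R by fact
  let ?H = "{w \<in> space (M \<Otimes>\<^sub>M R). h (snd w) \<in> K}"
  obtain y0 where y0: "y0 \<in> space R" using R.not_empty by blast
  have R_eq: "emeasure R X = emeasure (R \<Otimes>\<^sub>M R) (c -` X \<inter> space (R \<Otimes>\<^sub>M R))"
    if "X \<in> sets R" for X
    using that by (subst (1) c_distr[symmetric]) (simp add: emeasure_distr)
  have H[measurable]: "?H \<in> sets (M \<Otimes>\<^sub>M R)"
    by measurable
  have slice: "emeasure R (Pair \<omega> -` (A \<inter> ?H)) = emeasure R (Pair \<omega> -` A) * emeasure R K"
    if \<omega>: "\<omega> \<in> space M" for \<omega>
  proof -
    define L where "L = {x \<in> space R. (\<omega>, c (x, y0)) \<in> A}"
    have [measurable]: "L \<in> sets R"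
      unfolding L_def using \<omega> y0 by measurable
    have c_space: "c (x, y) \<in> space R" if "x \<in> space R" "y \<in> space R" for x y
      using measurable_space[OF c] that by (simp add: space_pair_measure)
    have AH: "c -` (Pair \<omega> -` (A \<inter> ?H)) \<inter> space (R \<Otimes>\<^sub>M R) = L \<times> K"
    proof (intro set_eqI iffI)
      fix z assume "z \<in> c -` (Pair \<omega> -` (A \<inter> ?H)) \<inter> space (R \<Otimes>\<^sub>M R)"
      then show "z \<in> L \<times> K"
        using A_c[OF \<omega> _ _ y0] h_c by (cases z) (auto simp: L_def space_pair_measure)
    next
      fix z assume "z \<in> L \<times> K"
      then show "z \<in> c -` (Pair \<omega> -` (A \<inter> ?H)) \<inter> space (R \<Otimes>\<^sub>M R)"
        using \<omega> c_space sets.sets_into_space[OF K] A_c[OF \<omega> _ _ y0] h_c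
        by (cases z) (auto simp: L_def space_pair_measure)
    qed
    have A': "c -` (Pair \<omega> -` A) \<inter> space (R \<Otimes>\<^sub>M R) = L \<times> space R"
    proof (intro set_eqI iffI)
      fix z assume "z \<in> c -` (Pair \<omega> -` A) \<inter> space (R \<Otimes>\<^sub>M R)"
      then show "z \<in> L \<times> space R"
        using A_c[OF \<omega> _ _ y0] by (cases z) (auto simp: L_def space_pair_measure)
    next
      fix z assume "z \<in> L \<times> space R"
      then show "z \<in> c -` (Pair \<omega> -` A) \<inter> space (R \<Otimes>\<^sub>M R)"
        using A_c[OF \<omega> _ _ y0] by (cases z) (auto simp: L_def space_pair_measure)
    qed
    have "emeasure R (Pair \<omega> -` (A \<inter> ?H)) = emeasure (R \<Otimes>\<^sub>M R) (L \<times> K)"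
      unfolding AH[symmetric] by (intro R_eq sets_Pair1) measurable
    also have "\<dots> = emeasure R L * emeasure R K"
      by (simp add: R.emeasure_pair_measure_Times)
    also have "emeasure R L = emeasure R (Pair \<omega> -` A)"
      using R_eq[of "Pair \<omega> -` A"] A' by (simp add: sets_Pair1 R.emeasure_pair_measure_Times R.emeasure_space_1)
    finally show ?thesis .
  qed
  have "emeasure (M \<Otimes>\<^sub>M R) (A \<inter> ?H) = (\<integral>\<^sup>+ \<omega>. emeasure R (Pair \<omega> -` A) * emeasure R K \<partial>M)"
    by (subst R.emeasure_pair_measure_alt) (auto intro!: nn_integral_cong slice simp del: vimage_Int)
  also have "\<dots> = emeasure (M \<Otimes>\<^sub>M R) A * emeasure R K"
    by (simp add: nn_integral_multc R.measurable_emeasure_Pair R.emeasure_pair_measure_alt)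
  finally show ?thesis .
qed

lemma measurable_seq_shift:
  "(\<lambda>\<omega> i. \<omega> (n + i)) \<in> PiM (UNIV :: nat set) (\<lambda>_. M) \<rightarrow>\<^sub>M PiM UNIV (\<lambda>_. M)"
  by (rule measurable_PiM_single') (auto simp: space_PiM)

lemma emeasure_prefix_Int_suffix:
  fixes M :: "'c measure" and ME :: "'a measure" and MU :: "'b measure"
  defines "R \<equiv> PiM UNIV (\<lambda>_::nat. ME) \<Otimes>\<^sub>M PiM UNIV (\<lambda>_::nat. MU)"
  assumes "sigma_finite_measure M" and ME: "prob_space ME" and MU: "prob_space MU"
    and A: "A \<in> sets (M \<Otimes>\<^sub>M R)"
    and A_prefix: "\<And>\<omega> a b a' b'.
         (\<omega>, (a, b)) \<in> space (M \<Otimes>\<^sub>M R) \<Longrightarrow> (\<omega>, (a', b')) \<in> space (M \<Otimes>\<^sub>M R) \<Longrightarrow>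
         (\<And>i. i < n \<Longrightarrow> a i = a' i \<and> b i = b' i) \<Longrightarrow>
         (\<omega>, (a, b)) \<in> A \<longleftrightarrow> (\<omega>, (a', b')) \<in> A"
    and K: "K \<in> sets R"
  shows "emeasure (M \<Otimes>\<^sub>M R)
           (A \<inter> {w \<in> space (M \<Otimes>\<^sub>M R). (\<lambda>i. fst (snd w) (n + i), \<lambda>i. snd (snd w) (n + i)) \<in> K})
       = emeasure (M \<Otimes>\<^sub>M R) A * emeasure R K"
proof -
  interpret ME: prob_space ME by fact
  interpret ME: sequence_space ME by unfold_locales
  interpret MU: prob_space MU by fact
  interpret MU: sequence_space MU by unfold_locales
  define c :: "((nat \<Rightarrow> 'a) \<times> (nat \<Rightarrow> 'b)) \<times> ((nat \<Rightarrow> 'a) \<times> (nat \<Rightarrow> 'b)) \<Rightarrow> (nat \<Rightarrow> 'a) \<times> (nat \<Rightarrow> 'b)"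
    where "c z = (comb_seq n (fst (fst z)) (fst (snd z)), comb_seq n (snd (fst z)) (snd (snd z)))" for z
  define h :: "(nat \<Rightarrow> 'a) \<times> (nat \<Rightarrow> 'b) \<Rightarrow> (nat \<Rightarrow> 'a) \<times> (nat \<Rightarrow> 'b)"
    where "h r = (\<lambda>i. fst r (n + i), \<lambda>i. snd r (n + i))" for r
  have c_distr: "distr (R \<Otimes>\<^sub>M R) R c = R"
  proof -
    have "distr (R \<Otimes>\<^sub>M R) R
        (\<lambda>((a, b), (a', b')). (case_prod (comb_seq n) (a, a'), case_prod (comb_seq n) (b, b'))) = R"
      unfolding R_def
      by (intro distr_pair_measure_combine prob_space_PiM ME MU measurable_comb_seq
          ME.PiM_comb_seq MU.PiM_comb_seq)
    moreover have "(\<lambda>((a, b), (a', b')). (case_prod (comb_seq n) (a, a'), case_prod (comb_seq n) (b, b'))) = c"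
      by (auto simp: c_def fun_eq_iff)
    ultimately show ?thesis by simp
  qed
  have c: "c \<in> R \<Otimes>\<^sub>M R \<rightarrow>\<^sub>M R"
    unfolding R_def c_def by measurable
  have h: "h \<in> R \<rightarrow>\<^sub>M R"
    unfolding R_def h_def
    by (intro measurable_Pair measurable_compose[OF measurable_fst measurable_seq_shift]
        measurable_compose[OF measurable_snd measurable_seq_shift])
  have h_c: "h (c (x, y)) = y" for x y
    by (auto simp: h_def c_def comb_seq_def)
  have A_c: "(\<omega>, c (x, y)) \<in> A \<longleftrightarrow> (\<omega>, c (x, y')) \<in> A"
    if "\<omega> \<in> space M" "x \<in> space R" "y \<in> space R" "y' \<in> space R" for \<omega> x y y'
  proof -
    have "c (x, y) \<in> space R" "c (x, y') \<in> space R"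
      using measurable_space[OF c] that by (auto simp: space_pair_measure)
    then show ?thesis
      using that A_prefix[of \<omega> "fst (c (x, y))" "snd (c (x, y))" "fst (c (x, y'))" "snd (c (x, y'))"]
      by (simp add: space_pair_measure c_def comb_seq_less)
  qed
  have "prob_space R"
    unfolding R_def by (intro prob_space_pair prob_space_PiM ME MU)
  then show ?thesis
    using emeasure_Int_vimage_eq_mult[OF assms(2) _ c c_distr h h_c A A_c K] by (simp add: h_def)
qed

lemma law_future_updates_sets:
  fixes E :: "'d edge set"
  defines "R \<equiv> PiM UNIV (\<lambda>_::nat. uniform_count_measure E) \<Otimes>\<^sub>M
                PiM UNIV (\<lambda>_::nat. uniform_measure lborel {0..1::real})"
  assumes K: "K \<in> sets R"
  shows "{w \<in> space (law \<mu> E). (\<lambda>i. fst (snd w) (n + i), \<lambda>i. snd (snd w) (n + i)) \<in> K}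
           \<in> sets (law \<mu> E)"
proof -
  have "(\<lambda>w. fst (snd w)) \<in> law \<mu> E \<rightarrow>\<^sub>M PiM UNIV (\<lambda>_. uniform_count_measure E)"
    and "(\<lambda>w. snd (snd w)) \<in> law \<mu> E \<rightarrow>\<^sub>M PiM UNIV (\<lambda>_. uniform_measure lborel {0..1::real})"
    unfolding law_def by measurable
  then have "(\<lambda>w. (\<lambda>i. fst (snd w) (n + i), \<lambda>i. snd (snd w) (n + i))) \<in> law \<mu> E \<rightarrow>\<^sub>M R"
    unfolding R_def by (intro measurable_Pair measurable_compose[OF _ measurable_seq_shift])
  from measurable_sets[OF this K] show ?thesis
    by (simp add: vimage_def Int_def conj_commute)
qed

lemma measure_chain_Int_future_updates:
  fixes E :: "'d edge set" and \<mu> V T B p q t y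
  defines "R \<equiv> PiM UNIV (\<lambda>_::nat. uniform_count_measure E) \<Otimes>\<^sub>M
                PiM UNIV (\<lambda>_::nat. uniform_measure lborel {0..1::real})"
    and "A \<equiv> {w \<in> space (law \<mu> E). snd (chain V E T B p q t w) = y}"
  assumes E: "finite E" "E \<noteq> {}" and A: "A \<in> sets (law \<mu> E)" and K: "K \<in> sets R"
  shows "measure (law \<mu> E)
           (A \<inter> {w \<in> space (law \<mu> E). (\<lambda>i. fst (snd w) (Suc t + i), \<lambda>i. snd (snd w) (Suc t + i)) \<in> K})
       = measure (law \<mu> E) A * measure R K"
proof -
  have ME: "prob_space (uniform_count_measure E)"
    by (rule prob_space_uniform_count_measure[OF E])
  have MU: "prob_space (uniform_measure lborel {0..1::real})"
    by (rule prob_space_uniform_measure) auto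
  interpret R: prob_space R
    unfolding R_def by (intro prob_space_pair prob_space_PiM ME MU)
  have law: "law \<mu> E = measure_pmf \<mu> \<Otimes>\<^sub>M R"
    by (simp add: law_def R_def)
  interpret L: prob_space "law \<mu> E"
    unfolding law by (intro prob_space_pair prob_space_measure_pmf R.prob_space_axioms)
  have "emeasure (law \<mu> E)
          (A \<inter> {w \<in> space (law \<mu> E). (\<lambda>i. fst (snd w) (Suc t + i), \<lambda>i. snd (snd w) (Suc t + i)) \<in> K})
      = emeasure (law \<mu> E) A * emeasure R K"
    unfolding law
  proof (rule emeasure_prefix_Int_suffix[OF prob_space_imp_sigma_finite[OF prob_space_measure_pmf] ME MU,
        folded R_def])
    show "A \<in> sets (measure_pmf \<mu> \<Otimes>\<^sub>M R)" "K \<in> sets R"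
      using A K by (simp_all add: law)
    fix \<omega> :: "'d config \<times> 'd config" and a a' :: "nat \<Rightarrow> 'd edge" and b b' :: "nat \<Rightarrow> real"
    assume "\<And>i. i < Suc t \<Longrightarrow> a i = a' i \<and> b i = b' i"
    then have "chain V E T B p q t (\<omega>, a, b) = chain V E T B p q t (\<omega>, a', b')"
      by (intro chain_cong_prefix) auto
    moreover assume "(\<omega>, a, b) \<in> space (measure_pmf \<mu> \<Otimes>\<^sub>M R)"
      and "(\<omega>, a', b') \<in> space (measure_pmf \<mu> \<Otimes>\<^sub>M R)"
    ultimately show "(\<omega>, a, b) \<in> A \<longleftrightarrow> (\<omega>, a', b') \<in> A"
      by (simp add: A_def law)
  qed
  then show ?thesis
    by (simp add: L.emeasure_eq_measure R.emeasure_eq_measure ennreal_mult[symmetric])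
qed

section \<open>Union bound over update times\<close>

lemma pred_eq_uniform_count_measure[measurable (raw)]:
  assumes "f \<in> M \<rightarrow>\<^sub>M uniform_count_measure E"
  shows "Measurable.pred M (\<lambda>x. f x = e)"
proof -
  have "{x \<in> space M. f x = e} = f -` ({e} \<inter> E) \<inter> space M"
    using measurable_space[OF assms] by (auto simp: space_uniform_count_measure)
  also have "\<dots> \<in> sets M"
    using assms by (rule measurable_sets) (auto simp: sets_uniform_count_measure)
  finally show ?thesis
    unfolding pred_def .
qed

lemma emeasure_schedule_hits_le:
  fixes E H :: "'a set" and c :: real and \<tau> :: "'a \<Rightarrow> nat"
  defines "R \<equiv> PiM UNIV (\<lambda>_::nat. uniform_count_measure E) \<Otimes>\<^sub>M
                PiM UNIV (\<lambda>_::nat. uniform_measure lborel {0..1::real})"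
  assumes E: "finite E" "E \<noteq> {}" and H: "H \<subseteq> E" and c: "0 \<le> c" "c \<le> 1"
  shows "emeasure R {r \<in> space R. \<forall>e\<in>H. fst r (\<tau> e) = e \<and> snd r (\<tau> e) < c}
       \<le> ennreal ((c / real (card E)) ^ card H)"
proof (cases "inj_on \<tau> H")
  case False
  then have "{r \<in> space R. \<forall>e\<in>H. fst r (\<tau> e) = e \<and> snd r (\<tau> e) < c} = {}"
    unfolding inj_on_def by auto metis
  then show ?thesis by (simp only: emeasure_empty zero_le)
next
  case True
  let ?ME = "uniform_count_measure E" and ?MU = "uniform_measure lborel {0..1::real}"
  interpret ME: prob_space ?ME by (rule prob_space_uniform_count_measure[OF E])
  interpret MU: prob_space ?MU by (rule prob_space_uniform_measure) auto
  interpret E: sequence_space ?ME by unfold_locales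
  interpret U: sequence_space ?MU by unfold_locales
  have finH: "finite H" using E H finite_subset by blast
  let ?e = "the_inv_into H \<tau>"
  have inv: "e \<in> H \<Longrightarrow> ?e (\<tau> e) = e" for e
    using True by (rule the_inv_into_f_f)
  have "{a \<in> space E.S. \<forall>e\<in>H. a (\<tau> e) = e} = {a \<in> space E.S. \<forall>j\<in>\<tau> ` H. a j \<in> {?e j}}"
    using inv by auto
  also have "emeasure E.S \<dots> = (\<Prod>j\<in>\<tau> ` H. emeasure ?ME {?e j})"
    using finH H inv by (intro E.emeasure_PiM_Collect) (auto simp: sets_uniform_count_measure)
  also have "\<dots> = (\<Prod>j\<in>\<tau> ` H. ennreal (1 / real (card E)))"
    using H inv E(1) by (intro prod.cong) (auto simp: ME.emeasure_eq_measure measure_uniform_count_measure)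
  finally have X: "emeasure E.S {a \<in> space E.S. \<forall>e\<in>H. a (\<tau> e) = e} = ennreal ((1 / real (card E)) ^ card H)"
    using True by (simp add: prod_ennreal card_image ennreal_power)
  have "{a \<in> space U.S. \<forall>e\<in>H. a (\<tau> e) < c} = {a \<in> space U.S. \<forall>j\<in>\<tau> ` H. a j \<in> {..<c}}"
    by auto
  also have "emeasure U.S \<dots> = (\<Prod>j\<in>\<tau> ` H. emeasure ?MU {..<c})"
    using finH by (intro U.emeasure_PiM_Collect) auto
  also have "emeasure ?MU {..<c} = ennreal c"
  proof -
    have "{0..1::real} \<inter> {..<c} = {0..<c}" using c by auto
    then show ?thesis using c by (simp add: divide_ennreal_def)
  qed
  finally have Y: "emeasure U.S {a \<in> space U.S. \<forall>e\<in>H. a (\<tau> e) < c} = ennreal (c ^ card H)"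
    using True c by (simp add: prod_ennreal card_image ennreal_power)
  have "{r \<in> space R. \<forall>e\<in>H. fst r (\<tau> e) = e \<and> snd r (\<tau> e) < c}
      = {a \<in> space E.S. \<forall>e\<in>H. a (\<tau> e) = e} \<times> {a \<in> space U.S. \<forall>e\<in>H. a (\<tau> e) < c}"
    by (auto simp: R_def space_pair_measure)
  moreover have "{a \<in> space E.S. \<forall>e\<in>H. a (\<tau> e) = e} \<in> sets E.S"
    using finH by measurable
  moreover have "{a \<in> space U.S. \<forall>e\<in>H. a (\<tau> e) < c} \<in> sets U.S"
    using finH by measurable
  ultimately show ?thesis
    using c by (simp add: R_def U.emeasure_pair_measure_Times X Y ennreal_mult[symmetric]
        power_mult_distrib[symmetric])
qed

lemma emeasure_all_hit_le:
  fixes E H :: "'a set" and c :: real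
  defines "R \<equiv> PiM UNIV (\<lambda>_::nat. uniform_count_measure E) \<Otimes>\<^sub>M
                PiM UNIV (\<lambda>_::nat. uniform_measure lborel {0..1::real})"
  assumes E: "finite E" "E \<noteq> {}" and H: "H \<subseteq> E" and c: "0 \<le> c" "c \<le> 1"
  shows "emeasure R {r \<in> space R. \<forall>e\<in>H. \<exists>i<s. fst r i = e \<and> snd r i < c}
       \<le> ennreal ((real s * (c / real (card E))) ^ card H)"
proof -
  let ?ME = "uniform_count_measure E" and ?MU = "uniform_measure lborel {0..1::real}"
  interpret ME: prob_space ?ME by (rule prob_space_uniform_count_measure[OF E])
  interpret MU: prob_space ?MU by (rule prob_space_uniform_measure) auto
  interpret E: sequence_space ?ME by unfold_locales
  interpret U: sequence_space ?MU by unfold_locales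
  have finH: "finite H" using E H finite_subset by blast
  define S where "S = PiE H (\<lambda>_. {..<s})"
  define hits where "hits \<tau> = {r \<in> space R. \<forall>e\<in>H. fst r (\<tau> e) = e \<and> snd r (\<tau> e) < c}" for \<tau>
  have hits_sets: "hits \<tau> \<in> sets R" for \<tau>
    unfolding hits_def R_def using finH by measurable
  have "{r \<in> space R. \<forall>e\<in>H. \<exists>i<s. fst r i = e \<and> snd r i < c} \<subseteq> (\<Union>\<tau>\<in>S. hits \<tau>)"
  proof safe
    fix r assume r: "r \<in> space R" and "\<forall>e\<in>H. \<exists>i<s. fst r i = e \<and> snd r i < c"
    then obtain \<tau> where \<tau>: "\<forall>e\<in>H. \<tau> e < s \<and> fst r (\<tau> e) = e \<and> snd r (\<tau> e) < c" by metis
    then have "restrict \<tau> H \<in> S" "r \<in> hits (restrict \<tau> H)"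
      using r by (auto simp: S_def hits_def)
    then show "r \<in> (\<Union>\<tau>\<in>S. hits \<tau>)" by blast
  qed
  then have "emeasure R {r \<in> space R. \<forall>e\<in>H. \<exists>i<s. fst r i = e \<and> snd r i < c}
      \<le> emeasure R (\<Union>\<tau>\<in>S. hits \<tau>)"
    using hits_sets by (intro emeasure_mono sets.finite_UN) (auto simp: S_def finH finite_PiE)
  also have "\<dots> \<le> (\<Sum>\<tau>\<in>S. emeasure R (hits \<tau>))"
    using hits_sets by (intro emeasure_subadditive_finite) (auto simp: S_def finH finite_PiE)
  also have "\<dots> \<le> (\<Sum>\<tau>\<in>S. ennreal ((c / real (card E)) ^ card H))"
    unfolding hits_def R_def by (intro sum_mono emeasure_schedule_hits_le E H c)
  also have "\<dots> = ennreal ((real s * (c / real (card E))) ^ card H)"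
    using finH c by (simp add: S_def card_PiE ennreal_of_nat_eq_real_of_nat ennreal_mult[symmetric]
        power_mult_distrib[symmetric])
  finally show ?thesis .
qed

section \<open>Closing the edges of a path\<close>

lemma measure_edges_closed_le:
  fixes c :: real and G :: "'d edge set"
  assumes E: "finite E" "E \<noteq> {}" and \<mu>: "set_pmf \<mu> \<subseteq> state_space E T B"
    and theta: "\<And>w e. e \<in> E \<Longrightarrow> theta V E T B p q w e \<le> c" and c: "0 \<le> c" "c \<le> 1"
    and G: "G \<subseteq> E"
    and A: "{w \<in> space (law \<mu> E). snd (chain V E T B p q t w) = y} \<in> sets (law \<mu> E)"
  shows "measure (law \<mu> E) {w \<in> space (law \<mu> E).
             (\<forall>e\<in>G. \<not> snd (chain V E T B p q (t + s) w) e) \<and> snd (chain V E T B p q t w) = y}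
       \<le> measure (law \<mu> E) {w \<in> space (law \<mu> E). snd (chain V E T B p q t w) = y}
           * (real s * (c / real (card E))) ^ card {e \<in> G. y e}"
proof -
  let ?R = "PiM UNIV (\<lambda>_::nat. uniform_count_measure E) \<Otimes>\<^sub>M
            PiM UNIV (\<lambda>_::nat. uniform_measure lborel {0..1::real})"
  let ?L = "law \<mu> E" and ?chain = "chain V E T B p q"
  define H where "H = {e \<in> G. y e}"
  define A where "A = {w \<in> space ?L. snd (?chain t w) = y}"
  define K where "K = {r \<in> space ?R. \<forall>e\<in>H. \<exists>i<s. fst r i = e \<and> snd r i < c}"
  let ?future = "{w \<in> space ?L. (\<lambda>i. fst (snd w) (Suc t + i), \<lambda>i. snd (snd w) (Suc t + i)) \<in> K}"
  have H: "H \<subseteq> E"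
    using G by (auto simp: H_def)
  have K_sets: "K \<in> sets ?R"
    unfolding K_def using finite_subset[OF H E(1)] by measurable
  interpret R: prob_space ?R
    using E by (intro prob_space_pair prob_space_PiM prob_space_uniform_count_measure
        prob_space_uniform_measure) auto
  interpret L: prob_space ?L
    unfolding law_def by (intro prob_space_pair prob_space_measure_pmf R.prob_space_axioms)
  have "AE w in ?L. fst w \<in> set_pmf \<mu>"
    unfolding law_def
    by (rule AE_distrD[OF measurable_fst]) (unfold R.distr_pair_fst, rule AE_measure_pmf)
  then have "AE w in ?L. (\<forall>e\<in>G. \<not> snd (?chain (t + s) w) e) \<and> snd (?chain t w) = y
      \<longrightarrow> w \<in> A \<inter> ?future"
  proof (rule AE_mp, intro AE_I2 impI)
    fix w assume w: "w \<in> space ?L" "fst w \<in> set_pmf \<mu>"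
      and closed: "(\<forall>e\<in>G. \<not> snd (?chain (t + s) w) e) \<and> snd (?chain t w) = y"
    have not_connects: "\<not> connects E T B (snd (fst w))"
      using w(2) \<mu> by (auto simp: state_space_def)
    have "\<exists>i<s. fst (snd w) (Suc t + i) = e \<and> snd (snd w) (Suc t + i) < c" if "e \<in> H" for e
    proof -
      have "snd (?chain t w) e" "\<not> snd (?chain (t + s) w) e"
        using closed that by (auto simp: H_def)
      then obtain i where "i < s" "fst (snd w) (Suc (t + i)) = e"
        "snd (snd w) (Suc (t + i)) < theta V E T B p q (snd (?chain (t + i) w)) e"
        using chain_closing_edge_updated[OF not_connects] by blast
      moreover have "theta V E T B p q (snd (?chain (t + i) w)) e \<le> c"
        using theta H that by blast
      ultimately show ?thesis
        by (intro exI[of _ i]) simp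
    qed
    moreover have "(\<lambda>i. fst (snd w) (Suc t + i), \<lambda>i. snd (snd w) (Suc t + i)) \<in> space ?R"
      using w(1) by (auto simp: law_def space_pair_measure space_PiM PiE_iff)
    ultimately show "w \<in> A \<inter> ?future"
      using w(1) closed by (auto simp: A_def K_def)
  qed
  then have "measure ?L {w \<in> space ?L. (\<forall>e\<in>G. \<not> snd (?chain (t + s) w) e) \<and> snd (?chain t w) = y}
      \<le> measure ?L (A \<inter> ?future)"
    using A law_future_updates_sets[OF K_sets, of \<mu> "Suc t"]
    by (intro L.finite_measure_mono_AE) (auto simp: A_def)
  also have "\<dots> = measure ?L A * measure ?R K"
    using measure_chain_Int_future_updates[OF E _ K_sets] A by (simp add: A_def)
  also have "\<dots> \<le> measure ?L A * (real s * (c / real (card E))) ^ card H"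
    using emeasure_all_hit_le[OF E H c, of s]
    by (intro mult_left_mono) (auto simp: K_def R.emeasure_eq_measure c)
  finally show ?thesis
    by (simp add: A_def H_def)
qed

theorem lemma4p1:
  fixes u :: "'d::finite \<Rightarrow> real ^ 'd" and r p q :: real and j :: 'd
    and \<mu> :: "('d config \<times> 'd config) pmf" and \<Gamma> :: "'d edge list"
    and t s k :: nat and y :: "'d config"
    and V :: "'d vtx set" and E :: "'d edge set" and T B :: "'d vtx set"
  assumes "CARD('d) \<ge> 2"
    and "orthonormal_frame u" and "r > 0"
    and "q \<ge> 1" and "0 \<le> p" and "p \<le> 1"
    and V_def: "V = box_vertices u r"
    and E_def: "E = box_edges V"
    and T_def: "T = top_set V u j"
    and B_def: "B = bot_set V u j"
    and "E \<noteq> {}"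
    and "stationary V E T B p q \<mu>"
    and "star_path E \<Gamma>" and "card (set \<Gamma>) = length \<Gamma>"
    and "k \<le> card (set \<Gamma>)"
    and "card {e \<in> set \<Gamma>. \<not> y e} = k"
    and "measure (law \<mu> E) {w \<in> space (law \<mu> E). snd (chain V E T B p q t w) = y} > 0"
  shows "measure (law \<mu> E) {w \<in> space (law \<mu> E).
             (\<forall>e\<in>set \<Gamma>. \<not> snd (chain V E T B p q (t + s) w) e)
             \<and> snd (chain V E T B p q t w) = y}
         / measure (law \<mu> E) {w \<in> space (law \<mu> E). snd (chain V E T B p q t w) = y}
       \<le> (real s * (1 - p) / (real (card E) * (1 + p / q - p))) ^ (card (set \<Gamma>) - k)"
proof -
  let ?c = "q * (1 - p) / (q * (1 - p) + p)"
  let ?A = "{w \<in> space (law \<mu> E). snd (chain V E T B p q t w) = y}"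
  have "finite V"
    using finite_box_vertices[OF assms(2)] V_def by simp
  then have "finite E"
    by (simp add: E_def finite_box_edges)
  have "measure (law \<mu> E) {w \<in> space (law \<mu> E). (\<forall>e\<in>set \<Gamma>. \<not> snd (chain V E T B p q (t + s) w) e)
          \<and> snd (chain V E T B p q t w) = y}
      \<le> measure (law \<mu> E) ?A * (real s * (?c / real (card E))) ^ card {e \<in> set \<Gamma>. y e}"
  proof (rule measure_edges_closed_le[OF \<open>finite E\<close> assms(11) _ _ closing_ratio_bounds(2,3)[OF assms(5,6,4)]])
    show "set_pmf \<mu> \<subseteq> state_space E T B"
      using assms(12) by (simp add: stationary_def)
    show "theta V E T B p q w e \<le> ?c" if "e \<in> E" for w e
      using theta_le[OF \<open>finite V\<close> \<open>finite E\<close> _ that assms(5,6,4)] that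
      by (simp add: E_def box_edges_def)
    show "set \<Gamma> \<subseteq> E"
      using assms(13) by (simp add: star_path_def)
    show "?A \<in> sets (law \<mu> E)" \<comment> \<open>a non-measurable event would have measure 0\<close>
      using assms(17) measure_notin_sets by fastforce
  qed
  moreover have "card {e \<in> set \<Gamma>. y e} = card (set \<Gamma>) - k"
  proof -
    have "{e \<in> set \<Gamma>. y e} = set \<Gamma> - {e \<in> set \<Gamma>. \<not> y e}" by auto
    then show ?thesis
      using assms(16) by (simp add: card_Diff_subset)
  qed
  moreover have "real s * (1 - p) / (real (card E) * (1 + p / q - p)) = real s * (?c / real (card E))"
    using assms(4) by (simp add: field_simps)
  ultimately show ?thesis
    using assms(17) by (simp add: pos_divide_le_eq mult.commute)
qed

end
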